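(* Let $n,d\in\mathbb{N}$. Let $\tilde Z=(\tilde Z_{j,k})_{j\in\{0,1\},k\in[n]}$ be a $2\times n$ array of i.i.d. random vectors, each uniformly distributed on $\{0,1\}^d$ (i.e. with i.i.d. $\mathrm{Ber}(1/2)$ coordinates), let $U=(U_1,\dots,U_n)$ be uniform on $\{0,1\}^n$ and independent of $\tilde Z$, and let $S_n=(Z_1,\dots,Z_n)$ with $Z_k=\tilde Z_{U_k,k}$. Call $i\in[d]$ a bad coordinate if $Z_k(i)=0$ for all $k\in[n]$, and let $B\in\{0,1\}^d$ be given by $B(i)=1$ iff $i$ is a bad coordinate, with $\|B\|_0$ the number of bad coordinates. Then $$H(U\mid B,\tilde Z)\le n\,\mathbb{E}\big[2^{-\|B\|_0}\big],$$ where entropy is measured in bits.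
   Context: $H(\cdot\mid\cdot)$ denotes conditional Shannon entropy (base-2 logarithm, so that $H(U)=n$). *)

theory Defs
  imports "HOL-Probability.Probability"
begin

definition cond_entropy2 :: "'w pmf \<Rightarrow> ('w \<Rightarrow> 'x) \<Rightarrow> ('w \<Rightarrow> 'y) \<Rightarrow> real" where
  "cond_entropy2 M X Y =
     (let P = map_pmf (\<lambda>w. (X w, Y w)) M; Q = map_pmf Y M in
      - (\<Sum>xy\<in>set_pmf P. pmf P xy * log 2 (pmf P xy / pmf Q (snd xy))))"

text \<open>Sample space: pairs (U, Zt) with U : [n] -> {0,1} and
  Zt : {0,1} x [n] -> {0,1}^d (coordinates indexed by [d]); bits are booleans
  (True = 1), indices are 0-based.\<close>
definition sample_space :: "nat \<Rightarrow> nat \<Rightarrow> ((nat \<Rightarrow> bool) \<times> (bool \<times> nat \<Rightarrow> nat \<Rightarrow> bool)) set" where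
  "sample_space n d =
     (PiE {..<n} (\<lambda>_. UNIV)) \<times> (PiE (UNIV \<times> {..<n}) (\<lambda>_. PiE {..<d} (\<lambda>_. UNIV)))"

definition Zsel :: "(nat \<Rightarrow> bool) \<Rightarrow> (bool \<times> nat \<Rightarrow> nat \<Rightarrow> bool) \<Rightarrow> nat \<Rightarrow> nat \<Rightarrow> bool" where
  "Zsel U Zt k = Zt (U k, k)"

definition bad_vec :: "nat \<Rightarrow> nat \<Rightarrow> (nat \<Rightarrow> bool) \<Rightarrow> (bool \<times> nat \<Rightarrow> nat \<Rightarrow> bool) \<Rightarrow> nat \<Rightarrow> bool" where
  "bad_vec n d U Zt = (\<lambda>i. if i < d then (\<forall>k<n. \<not> Zsel U Zt k i) else False)"

definition num_bad :: "nat \<Rightarrow> nat \<Rightarrow> (nat \<Rightarrow> bool) \<Rightarrow> (bool \<times> nat \<Rightarrow> nat \<Rightarrow> bool) \<Rightarrow> nat" where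
  "num_bad n d U Zt = card {i. i < d \<and> bad_vec n d U Zt i}"

end

theory Submission
  imports Defs
begin

text \<open>Conditionally on (B, Zt), U is uniform on the fibre of (B, Zt), so H(U | B, Zt) is
  the average of log2 of the fibre size. Call k flippable if the unused vector Zt(1 - U_k, k)
  vanishes on every bad coordinate. If k is not flippable, then U_k is determined by (B, Zt),
  because choosing the other vector would destroy a bad coordinate; hence the fibre has at most
  2^(number of flippable k) elements. As B does not depend on Zt(1 - U_k, k), resampling that
  uniform vector shows that k is flippable with conditional probability 2^(-|B|), and summing
  over k gives the bound.\<close>

lemma sum_PiE_insert:
  assumes "p \<notin> D"
  shows "(\<Sum>f\<in>PiE (insert p D) T. g f) = (\<Sum>y\<in>T p. \<Sum>h\<in>PiE D T. g (h(p := y)))"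
  unfolding PiE_insert_eq
  by (subst sum.reindex[OF inj_combinator[OF assms]]) (simp add: sum.cartesian_product split_def)

lemma sum_PiE_resample:
  fixes g :: "('a \<Rightarrow> 'b) \<Rightarrow> 'c :: comm_semiring_1"
  assumes "p \<in> D"
  shows "of_nat (card V) * (\<Sum>f\<in>PiE D (\<lambda>_. V). g f) = (\<Sum>f\<in>PiE D (\<lambda>_. V). \<Sum>v\<in>V. g (f(p := v)))"
proof -
  have D: "D = insert p (D - {p})" using assms by auto
  have "(\<Sum>f\<in>PiE D (\<lambda>_. V). \<Sum>v\<in>V. g (f(p := v)))
      = (\<Sum>y\<in>V. \<Sum>h\<in>PiE (D - {p}) (\<lambda>_. V). \<Sum>v\<in>V. g (h(p := v)))"
    by (subst D, subst sum_PiE_insert) simp_all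
  also have "\<dots> = of_nat (card V) * (\<Sum>v\<in>V. \<Sum>h\<in>PiE (D - {p}) (\<lambda>_. V). g (h(p := v)))"
    by (simp add: sum.swap[of _ V])
  also have "\<dots> = of_nat (card V) * (\<Sum>f\<in>PiE D (\<lambda>_. V). g f)"
    by (subst (2) D, subst sum_PiE_insert) simp_all
  finally show ?thesis ..
qed

lemma card_PiE_bool_vanishing:
  assumes "finite I" and "J \<subseteq> I"
  shows "card {v \<in> PiE I (\<lambda>_. UNIV :: bool set). \<forall>i\<in>J. \<not> v i} = 2 ^ card (I - J)"
proof -
  have "{v \<in> PiE I (\<lambda>_. UNIV :: bool set). \<forall>i\<in>J. \<not> v i}
      = PiE I (\<lambda>i. if i \<in> J then {False} else UNIV)"
    using \<open>J \<subseteq> I\<close> by (auto simp: PiE_iff extensional_def) (metis singletonD subsetD)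
  moreover have "(\<Prod>i\<in>I. card (if i \<in> J then {False} else UNIV :: bool set)) = (\<Prod>i\<in>I - J. 2)"
    using assms by (subst prod.mono_neutral_cong_right[of I "I - J"]) auto
  ultimately show ?thesis using assms by (simp add: card_PiE)
qed

lemma card_le_two_power_if_agree_outside:
  assumes F: "F \<subseteq> PiE I (\<lambda>_. UNIV :: bool set)" and "finite A"
    and agree: "\<And>f g i. f \<in> F \<Longrightarrow> g \<in> F \<Longrightarrow> i \<in> I - A \<Longrightarrow> f i = g i"
  shows "card F \<le> 2 ^ card A"
proof -
  have "inj_on (\<lambda>f. restrict f A) F"
  proof (rule inj_onI)
    fix f g assume "f \<in> F" "g \<in> F" "restrict f A = restrict g A"
    then have "f i = g i" if "i \<in> I" for i
      using that agree by (cases "i \<in> A") (metis restrict_apply', auto)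
    with \<open>f \<in> F\<close> \<open>g \<in> F\<close> F show "f = g"
      by (intro PiE_ext[of f I "\<lambda>_. UNIV" g]) auto
  qed
  then have "card F \<le> card (PiE A (\<lambda>_. UNIV :: bool set))"
    using \<open>finite A\<close> by (intro card_inj_on_le) (auto simp: finite_PiE)
  also have "\<dots> = 2 ^ card A" using \<open>finite A\<close> by (simp add: card_PiE)
  finally show ?thesis .
qed

lemma cond_entropy2_pmf_of_set:
  assumes "finite S" and "S \<noteq> {}" and inj: "inj_on (\<lambda>w. (X w, Y w)) S"
  shows "cond_entropy2 (pmf_of_set S) X Y
     = (\<Sum>w\<in>S. log 2 (card {w'\<in>S. Y w' = Y w})) / card S"
proof -
  define XY where "XY = (\<lambda>w. (X w, Y w))"
  define P where "P = map_pmf XY (pmf_of_set S)"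
  define Q where "Q = map_pmf Y (pmf_of_set S)"
  have set_P: "set_pmf P = XY ` S" using assms by (simp add: P_def)
  have pmf_P: "pmf P (XY w) = 1 / card S" if "w \<in> S" for w
  proof -
    have "S \<inter> XY -` {XY w} = {w}" using inj that unfolding XY_def inj_on_def by auto
    then show ?thesis unfolding P_def pmf_map using assms by (simp add: measure_pmf_of_set)
  qed
  have pmf_Q: "pmf Q (Y w) = card {w'\<in>S. Y w' = Y w} / card S" for w
  proof -
    have "S \<inter> Y -` {Y w} = {w'\<in>S. Y w' = Y w}" by auto
    then show ?thesis unfolding Q_def pmf_map using assms by (simp add: measure_pmf_of_set)
  qed
  have fiber_pos: "card {w'\<in>S. Y w' = Y w} > 0" if "w \<in> S" for w
    using that \<open>finite S\<close> by (subst card_gt_0_iff) auto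
  have "card S > 0" using assms by (simp add: card_gt_0_iff)
  have "cond_entropy2 (pmf_of_set S) X Y
      = - (\<Sum>w\<in>S. pmf P (XY w) * log 2 (pmf P (XY w) / pmf Q (Y w)))"
    unfolding cond_entropy2_def Let_def P_def[symmetric] XY_def[symmetric] Q_def[symmetric] set_P
    using inj by (simp add: sum.reindex XY_def)
  also have "\<dots> = - (\<Sum>w\<in>S. log 2 (1 / card {w'\<in>S. Y w' = Y w}) / card S)"
    using \<open>card S > 0\<close> by (intro arg_cong[where f = uminus] sum.cong refl) (simp add: pmf_P pmf_Q)
  also have "\<dots> = (\<Sum>w\<in>S. log 2 (card {w'\<in>S. Y w' = Y w})) / card S"
    using fiber_pos by (simp add: log_divide sum_divide_distrib[symmetric] sum_negf[symmetric])
  finally show ?thesis .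
qed

lemma finite_sample_space: "finite (sample_space n d)"
  unfolding sample_space_def by (intro finite_cartesian_product finite_PiE) auto

lemma sample_space_nonempty: "sample_space n d \<noteq> {}"
  unfolding sample_space_def by (auto simp: PiE_eq_empty_iff)

abbreviation observed :: "nat \<Rightarrow> nat \<Rightarrow> (nat \<Rightarrow> bool) \<times> (bool \<times> nat \<Rightarrow> nat \<Rightarrow> bool)
    \<Rightarrow> (nat \<Rightarrow> bool) \<times> (bool \<times> nat \<Rightarrow> nat \<Rightarrow> bool)" where
  "observed n d w \<equiv> (bad_vec n d (fst w) (snd w), snd w)"

lemma bad_vec_update_unused:
  "bad_vec n d U (Zt((\<not> U k, k) := v)) = bad_vec n d U Zt"
proof -
  have "(Zt((\<not> U k, k) := v)) (U j, j) = Zt (U j, j)" for j by auto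
  then show ?thesis unfolding bad_vec_def Zsel_def by simp
qed

definition flippable :: "nat \<Rightarrow> nat \<Rightarrow> nat \<Rightarrow> (nat \<Rightarrow> bool) \<times> (bool \<times> nat \<Rightarrow> nat \<Rightarrow> bool) \<Rightarrow> bool" where
  "flippable n d k w \<longleftrightarrow> (\<forall>i<d. bad_vec n d (fst w) (snd w) i \<longrightarrow> \<not> snd w (\<not> fst w k, k) i)"

lemma pinned_unless_flippable:
  assumes "bad_vec n d U' Zt = bad_vec n d U Zt" and "k < n" and "\<not> flippable n d k (U, Zt)"
  shows "U' k = U k"
proof (rule ccontr)
  assume "U' k \<noteq> U k"
  then have flipped: "U' k = (\<not> U k)" by blast
  obtain i where i: "i < d" "bad_vec n d U Zt i" "Zt (\<not> U k, k) i"
    using assms(3) unfolding flippable_def by auto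
  then have "bad_vec n d U' Zt i" using assms(1) by simp
  then have "\<not> Zt (U' k, k) i" using \<open>k < n\<close> unfolding bad_vec_def Zsel_def by (simp split: if_splits)
  with i(3) flipped show False by simp
qed

lemma card_fiber_le:
  "card {w'\<in>sample_space n d. observed n d w' = observed n d w}
     \<le> 2 ^ card {k\<in>{..<n}. flippable n d k w}"
  (is "card ?F \<le> _")
proof -
  have "inj_on fst ?F"
    by (rule inj_onI) (simp add: prod_eq_iff)
  then have "card ?F = card (fst ` ?F)" by (rule card_image[symmetric])
  also have "\<dots> \<le> 2 ^ card {k\<in>{..<n}. flippable n d k w}"
  proof (rule card_le_two_power_if_agree_outside)
    have "fst ` ?F \<subseteq> fst ` sample_space n d" by (rule image_mono) blast
    also have "\<dots> = PiE {..<n} (\<lambda>_. UNIV)"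
      unfolding sample_space_def by (simp add: PiE_eq_empty_iff)
    finally show "fst ` ?F \<subseteq> PiE {..<n} (\<lambda>_. UNIV)" .
  next
    have pinned: "U' k = fst w k" if "U' \<in> fst ` ?F" and "k \<in> {..<n} - {k\<in>{..<n}. flippable n d k w}" for U' k
    proof -
      from that(1) have "bad_vec n d U' (snd w) = bad_vec n d (fst w) (snd w)"
        by force
      moreover from that(2) have "k < n" "\<not> flippable n d k (fst w, snd w)" by simp_all
      ultimately show ?thesis by (rule pinned_unless_flippable)
    qed
    fix U1 U2 k assume U: "U1 \<in> fst ` ?F" "U2 \<in> fst ` ?F" and k: "k \<in> {..<n} - {k\<in>{..<n}. flippable n d k w}"
    show "U1 k = U2 k" using pinned[OF U(1) k] pinned[OF U(2) k] by simp
  qed simp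
  finally show ?thesis .
qed

lemma sum_vanishing_on_bad_coordinates:
  "(\<Sum>v\<in>PiE {..<d} (\<lambda>_. UNIV). of_bool (\<forall>i<d. bad_vec n d U Zt i \<longrightarrow> \<not> v i))
     = 2 ^ d * 2 powr - real (num_bad n d U Zt)"
proof -
  define J where "J = {i. i < d \<and> bad_vec n d U Zt i}"
  have J: "J \<subseteq> {..<d}" "card J \<le> d" unfolding J_def by (auto intro: card_mono[of "{..<d}", simplified])
  have "PiE {..<d} (\<lambda>_. UNIV) \<inter> {v. \<forall>i<d. bad_vec n d U Zt i \<longrightarrow> \<not> v i}
      = {v\<in>PiE {..<d} (\<lambda>_. UNIV). \<forall>i\<in>J. \<not> v i}"
    unfolding J_def by auto
  then have "(\<Sum>v\<in>PiE {..<d} (\<lambda>_. UNIV). of_bool (\<forall>i<d. bad_vec n d U Zt i \<longrightarrow> \<not> v i))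
      = real (2 ^ (d - card J))"
    using J by (simp add: finite_PiE card_PiE_bool_vanishing card_Diff_subset finite_subset)
  also have "\<dots> = (2::real) ^ (d - card J)"
    by simp
  also have "\<dots> = 2 ^ d / 2 ^ card J"
    using J by (simp add: power_diff)
  also have "\<dots> = 2 ^ d * 2 powr - real (num_bad n d U Zt)"
    by (simp add: num_bad_def J_def powr_minus powr_realpow divide_inverse)
  finally show ?thesis .
qed

lemma sum_flippable:
  assumes "k < n"
  shows "(\<Sum>Zt\<in>PiE (UNIV \<times> {..<n}) (\<lambda>_. PiE {..<d} (\<lambda>_. UNIV)). of_bool (flippable n d k (U, Zt)))
       = (\<Sum>Zt\<in>PiE (UNIV \<times> {..<n}) (\<lambda>_. PiE {..<d} (\<lambda>_. UNIV)). 2 powr - real (num_bad n d U Zt))"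
proof -
  define V where "V = PiE {..<d} (\<lambda>_. UNIV :: bool set)"
  define Zs where "Zs = PiE ((UNIV :: bool set) \<times> {..<n}) (\<lambda>_. V)"
  have "2 ^ d * (\<Sum>Zt\<in>Zs. of_bool (flippable n d k (U, Zt)))
      = (\<Sum>Zt\<in>Zs. \<Sum>v\<in>V. of_bool (flippable n d k (U, Zt((\<not> U k, k) := v))) :: real)"
    using sum_PiE_resample[of "(\<not> U k, k)" "UNIV \<times> {..<n}" V] assms
    by (simp add: Zs_def V_def card_PiE)
  also have "\<dots> = (\<Sum>Zt\<in>Zs. 2 ^ d * 2 powr - real (num_bad n d U Zt))"
    unfolding flippable_def V_def by (simp add: bad_vec_update_unused sum_vanishing_on_bad_coordinates)
  finally show ?thesis by (simp add: Zs_def V_def sum_distrib_left[symmetric])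
qed

lemma card_flippable:
  assumes "k < n"
  shows "real (card {w\<in>sample_space n d. flippable n d k w})
       = (\<Sum>w\<in>sample_space n d. 2 powr - real (num_bad n d (fst w) (snd w)))"
proof -
  define Us where "Us = PiE {..<n} (\<lambda>_. UNIV :: bool set)"
  define Zs where "Zs = PiE ((UNIV :: bool set) \<times> {..<n}) (\<lambda>_. PiE {..<d} (\<lambda>_. UNIV :: bool set))"
  have S: "sample_space n d = Us \<times> Zs" unfolding sample_space_def Us_def Zs_def ..
  have "real (card {w\<in>sample_space n d. flippable n d k w})
      = (\<Sum>w\<in>sample_space n d. of_bool (flippable n d k w))"
    using finite_sample_space by (simp add: Int_def)
  also have "\<dots> = (\<Sum>U\<in>Us. \<Sum>Zt\<in>Zs. of_bool (flippable n d k (U, Zt)))"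
    unfolding S sum.cartesian_product by (simp add: split_def)
  also have "\<dots> = (\<Sum>U\<in>Us. \<Sum>Zt\<in>Zs. 2 powr - real (num_bad n d U Zt))"
    unfolding Zs_def using assms by (intro sum.cong refl sum_flippable)
  also have "\<dots> = (\<Sum>w\<in>sample_space n d. 2 powr - real (num_bad n d (fst w) (snd w)))"
    unfolding S sum.cartesian_product by (simp add: split_def)
  finally show ?thesis .
qed

lemma log_card_fiber_le:
  assumes "w \<in> sample_space n d"
  shows "log 2 (card {w'\<in>sample_space n d. observed n d w' = observed n d w})
     \<le> card {k\<in>{..<n}. flippable n d k w}"
    (is "log 2 (card ?F) \<le> card ?A")
proof -
  have "card ?F > 0" using assms finite_sample_space by (subst card_gt_0_iff) auto
  moreover have "real (card ?F) \<le> 2 powr card ?A"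
    using card_fiber_le[of n d w] by (simp add: powr_realpow flip: of_nat_le_iff)
  ultimately show ?thesis by (simp add: log_le_iff)
qed

theorem lemmaC3:
  fixes n d :: nat
  defines "M \<equiv> pmf_of_set (sample_space n d)"
  shows "cond_entropy2 M fst (\<lambda>w. (bad_vec n d (fst w) (snd w), snd w))
           \<le> real n * measure_pmf.expectation M
                 (\<lambda>w. 2 powr (- real (num_bad n d (fst w) (snd w))))"
proof -
  let ?S = "sample_space n d"
  have "inj_on (\<lambda>w. (fst w, observed n d w)) ?S"
    by (auto simp: inj_on_def prod_eq_iff)
  then have "cond_entropy2 M fst (observed n d)
      = (\<Sum>w\<in>?S. log 2 (card {w'\<in>?S. observed n d w' = observed n d w})) / card ?S"
    unfolding M_def by (intro cond_entropy2_pmf_of_set finite_sample_space sample_space_nonempty)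
  also have "\<dots> \<le> (\<Sum>w\<in>?S. real (card {k\<in>{..<n}. flippable n d k w})) / card ?S"
    by (intro divide_right_mono sum_mono log_card_fiber_le) simp_all
  also have "\<dots> = (\<Sum>k<n. real (card {w\<in>?S. flippable n d k w})) / card ?S"
    using sum.swap_restrict[of ?S "{..<n}" "\<lambda>_ _. 1 :: real" "\<lambda>w k. flippable n d k w"]
    by (simp add: finite_sample_space)
  also have "\<dots> = real n * ((\<Sum>w\<in>?S. 2 powr - real (num_bad n d (fst w) (snd w))) / card ?S)"
    by (simp add: card_flippable)
  also have "\<dots> = real n * measure_pmf.expectation M (\<lambda>w. 2 powr - real (num_bad n d (fst w) (snd w)))"
    unfolding M_def by (simp add: integral_pmf_of_set finite_sample_space sample_space_nonempty)
  finally show ?thesis .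
qed

end
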